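(* Let $q_1,q_2$ be piecewise continuous on $[a,b]$, and let $a,b$ be consecutive zeros of a solution $u$ of $u''+q_1(t)u=0$. Suppose $J\subset[a,b]$ is an interval such that $q_1(t)\le q_2(t)$ for all $t\in[a,b]\setminus J$ and $q_1(t)>q_2(t)$ for all $t\in J$. Then every solution $v$ of $v''+q_2(t)v=0$ has at most one zero in $J$.
   Context: "Solution" always means a nontrivial (not identically zero) solution. *)

theory Defs
  imports "HOL-Analysis.Analysis"
begin

definition piecewise_continuous_on :: "real \<Rightarrow> real \<Rightarrow> (real \<Rightarrow> real) \<Rightarrow> bool" where
  "piecewise_continuous_on a b q \<longleftrightarrow>
     (\<exists>S. finite S \<and> continuous_on ({a..b} - S) q \<and>
        (\<forall>s\<in>S. (a < s \<longrightarrow> (\<exists>l. (q \<longlongrightarrow> l) (at_left s))) \<and>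
                (s < b \<longrightarrow> (\<exists>l. (q \<longlongrightarrow> l) (at_right s)))))"

definition is_solution :: "(real \<Rightarrow> real) \<Rightarrow> real \<Rightarrow> real \<Rightarrow> (real \<Rightarrow> real) \<Rightarrow> bool" where
  "is_solution q a b u \<longleftrightarrow>
     (\<exists>u'. (\<forall>t\<in>{a..b}. (u has_real_derivative u' t) (at t within {a..b})) \<and>
           continuous_on {a..b} u' \<and>
           (\<exists>S. finite S \<and>
              (\<forall>t\<in>{a..b} - S. (u' has_real_derivative (- q t * u t)) (at t within {a..b})))) \<and>
     (\<exists>t\<in>{a..b}. u t \<noteq> 0)"

end

theory Submission
  imports Defs
begin

(*
  Suppose a solution v of v'' + q2 v = 0 had two zeros s < t in J. If v vanishes on (s, t), then so
  does v', and uniqueness for the initial value problem at a point of (s, t) forces v = 0 on [a, b].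
  Otherwise v has two consecutive zeros c < d in [s, t], and the classical Sturm comparison argument
  applies on [c, d], where q1 > q2: u has no zero in (c, d), so after changing the sign of v we have
  u v > 0 there, and the Wronskian W = u v' - u' v is strictly increasing because
  W' = (q1 - q2) u v > 0; but W c = u c v' c >= 0 >= u d v' d = W d.

  Only the absence of zeros of u in (a, b), the inequality q1 > q2 on J and the piecewise continuity
  of q2 (needed for uniqueness) are used.
*)

lemma at_within_diff_finite:
  fixes x :: "'a::t1_space"
  assumes "finite T"
  shows "at x within (S - T) = at x within S"
proof -
  have "at x within (S \<inter> T) = bot"
    using islimpt_finite[of "S \<inter> T" x] assms by (simp add: trivial_limit_within)
  then show ?thesis
    using at_within_union[of x "S - T" "S \<inter> T"] by (simp add: Un_Diff_Int)
qed

lemma DERIV_pos_imp_increasing_open_finite: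
  fixes f :: "real \<Rightarrow> real"
  assumes "finite S" "a < b" "continuous_on {a..b} f"
    and "\<And>x. x \<in> {a<..<b} - S \<Longrightarrow> \<exists>y. DERIV f x :> y \<and> y > 0"
  shows "f a < f b"
  using assms
proof (induction S arbitrary: a b rule: finite_induct)
  case empty
  then show ?case
    using DERIV_pos_imp_increasing_open[of a b f] by simp
next
  case (insert p S)
  have IH: "f c < f d" if "a \<le> c" "c < d" "d \<le> b" "p \<notin> {c<..<d}" for c d
  proof (rule insert.IH)
    show "c < d" by fact
    show "continuous_on {c..d} f"
      using that by (intro continuous_on_subset[OF insert.prems(2)]) auto
    show "\<exists>y. DERIV f x :> y \<and> y > 0" if "x \<in> {c<..<d} - S" for x
      using that \<open>a \<le> c\<close> \<open>d \<le> b\<close> \<open>p \<notin> {c<..<d}\<close> by (intro insert.prems(3)) auto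
  qed
  show ?case
  proof (cases "p \<in> {a<..<b}")
    case False
    then show ?thesis
      using IH[of a b] insert.prems(1) by simp
  next
    case True
    then have "f a < f p" "f p < f b"
      using IH[of a p] IH[of p b] by auto
    then show ?thesis by simp
  qed
qed

lemma abs_diff_le_of_deriv_bound:
  fixes f f' :: "real \<Rightarrow> real"
  assumes "c \<le> d" "continuous_on {c..d} f"
    and "\<And>z. z \<in> {c<..<d} \<Longrightarrow> (f has_real_derivative f' z) (at z)"
    and "\<And>z. z \<in> {c<..<d} \<Longrightarrow> \<bar>f' z\<bar> \<le> B"
  shows "\<bar>f d - f c\<bar> \<le> B * (d - c)"
proof (cases "c = d")
  case False
  then obtain l z where z: "c < z" "z < d" "(f has_real_derivative l) (at z)"
    and mvt: "f d - f c = (d - c) * l"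
    using MVT[of c d f] assms by (fastforce simp: real_differentiable_def)
  then have "l = f' z"
    using assms(3) by (simp add: DERIV_unique)
  then have "\<bar>l\<bar> \<le> B"
    using assms(4) z by simp
  have "\<bar>f d - f c\<bar> = \<bar>l\<bar> * (d - c)"
    using mvt \<open>c \<le> d\<close> by (simp add: abs_mult)
  also have "\<dots> \<le> B * (d - c)"
    using \<open>\<bar>l\<bar> \<le> B\<close> \<open>c \<le> d\<close> by (simp add: mult_right_mono)
  finally show ?thesis .
qed simp

lemma continuous_on_nonzero_sign_cases:
  fixes f :: "real \<Rightarrow> real"
  assumes "continuous_on {c<..<d} f" and "\<And>x. x \<in> {c<..<d} \<Longrightarrow> f x \<noteq> 0"
  shows "(\<forall>x\<in>{c<..<d}. f x > 0) \<or> (\<forall>x\<in>{c<..<d}. f x < 0)"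
proof (rule ccontr)
  assume "\<not> ?thesis"
  then obtain x y where xy: "x \<in> {c<..<d}" "y \<in> {c<..<d}" "f x < 0" "0 < f y"
    using assms(2) by (meson linorder_neqE_linordered_idom)
  have "connected (f ` {c<..<d})"
    using connected_continuous_image[OF assms(1)] by simp
  then have "0 \<in> f ` {c<..<d}"
    using xy unfolding connected_iff_interval by (meson image_eqI less_imp_le)
  then show False
    using assms(2) by force
qed

lemma continuous_on_consecutive_zeros:
  fixes f :: "real \<Rightarrow> real"
  assumes cont: "continuous_on {s..t} f" and "f s = 0" "f t = 0"
    and x: "x \<in> {s<..<t}" "f x \<noteq> 0"
  obtains c d where "s \<le> c" "c < d" "d \<le> t" "f c = 0" "f d = 0"
    and "\<And>y. y \<in> {c<..<d} \<Longrightarrow> f y \<noteq> 0"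
proof -
  define L where "L = {y \<in> {s..x}. f y = 0}"
  define R where "R = {y \<in> {x..t}. f y = 0}"
  have "closed L"
    unfolding L_def using x
    by (intro continuous_closed_preimage_constant continuous_on_subset[OF cont]) auto
  moreover have "closed R"
    unfolding R_def using x
    by (intro continuous_closed_preimage_constant continuous_on_subset[OF cont]) auto
  moreover have "s \<in> L" "t \<in> R" "bdd_above L" "bdd_below R"
    using assms unfolding L_def R_def by (auto intro: bdd_aboveI bdd_belowI)
  ultimately have L: "Sup L \<in> L" and R: "Inf R \<in> R"
    by (auto intro: closed_contains_Sup closed_contains_Inf)
  have "f y \<noteq> 0" if y: "y \<in> {Sup L<..<Inf R}" for y
  proof
    assume "f y = 0"
    have "s \<le> y" "y \<le> t"
      using y L R unfolding L_def R_def by auto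
    with \<open>f y = 0\<close> have "y \<in> L \<or> y \<in> R"
      unfolding L_def R_def by auto
    then show False
      using y cSup_upper[OF _ \<open>bdd_above L\<close>] cInf_lower[OF _ \<open>bdd_below R\<close>] by force
  qed
  moreover have "Sup L < x" "x < Inf R"
    using L R x unfolding L_def R_def by (metis (mono_tags) mem_Collect_eq atLeastAtMost_iff order_less_le)+
  moreover have "s \<le> Sup L" "Inf R \<le> t" "f (Sup L) = 0" "f (Inf R) = 0"
    using L R unfolding L_def R_def by auto
  ultimately show ?thesis
    using that[of "Sup L" "Inf R"] by force
qed

lemma piecewise_continuous_on_locally_bounded:
  assumes "piecewise_continuous_on a b q" and x0: "x0 \<in> {a..b}"
  shows "\<exists>M. \<forall>\<^sub>F y in at x0 within {a..b}. \<bar>q y\<bar> \<le> M"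
proof -
  obtain T where "finite T" and cont: "continuous_on ({a..b} - T) q"
    and lim: "\<And>s. s \<in> T \<Longrightarrow> (a < s \<longrightarrow> (\<exists>l. (q \<longlongrightarrow> l) (at_left s))) \<and>
                              (s < b \<longrightarrow> (\<exists>l. (q \<longlongrightarrow> l) (at_right s)))"
    using assms(1) unfolding piecewise_continuous_on_def by blast
  have bounded: "\<exists>M. \<forall>\<^sub>F y in F. \<bar>q y\<bar> \<le> M" if "(q \<longlongrightarrow> l) F" for l F
    using tendstoD[OF that zero_less_one]
    by (intro exI[of _ "\<bar>l\<bar> + 1"]) (auto elim!: eventually_mono simp: dist_real_def)
  have "(\<exists>l. (q \<longlongrightarrow> l) (at x0 within {a..<x0})) \<and> (\<exists>l. (q \<longlongrightarrow> l) (at x0 within {x0<..b}))"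
  proof (cases "x0 \<in> T")
    case False
    then have "(q \<longlongrightarrow> q x0) (at x0 within {a..b})"
      using cont x0 at_within_diff_finite[OF \<open>finite T\<close>] by (metis continuous_on_def Diff_iff)
    moreover have "{a..<x0} \<subseteq> {a..b}" "{x0<..b} \<subseteq> {a..b}"
      using x0 by auto
    ultimately show ?thesis
      by (blast intro: tendsto_within_subset)
  next
    case True
    have "\<exists>l. (q \<longlongrightarrow> l) (at x0 within {a..<x0})"
    proof (cases "a < x0")
      case True
      then obtain l where "(q \<longlongrightarrow> l) (at_left x0)"
        using lim[OF \<open>x0 \<in> T\<close>] by blast
      moreover have "{a..<x0} \<subseteq> {..<x0}"
        by auto
      ultimately show ?thesis
        using tendsto_within_subset by blast
    qed simp
    moreover have "\<exists>l. (q \<longlongrightarrow> l) (at x0 within {x0<..b})"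
    proof (cases "x0 < b")
      case True
      then obtain l where "(q \<longlongrightarrow> l) (at_right x0)"
        using lim[OF \<open>x0 \<in> T\<close>] by blast
      moreover have "{x0<..b} \<subseteq> {x0<..}"
        by auto
      ultimately show ?thesis
        using tendsto_within_subset by blast
    qed simp
    ultimately show ?thesis ..
  qed
  then obtain M1 M2 where "\<forall>\<^sub>F y in at x0 within {a..<x0}. \<bar>q y\<bar> \<le> M1"
    and "\<forall>\<^sub>F y in at x0 within {x0<..b}. \<bar>q y\<bar> \<le> M2"
    using bounded by meson
  then have "\<forall>\<^sub>F y in at x0 within ({a..<x0} \<union> {x0<..b}). \<bar>q y\<bar> \<le> max M1 M2"
    unfolding at_within_union eventually_sup by (auto elim: eventually_mono)
  moreover have "{a..<x0} \<union> {x0<..b} = {a..b} - {x0}"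
    using x0 by auto
  ultimately show ?thesis
    by (metis at_within_diff_finite finite.emptyI finite_insert)
qed

definition solves_ode ::
    "(real \<Rightarrow> real) \<Rightarrow> real \<Rightarrow> real \<Rightarrow> (real \<Rightarrow> real) \<Rightarrow> (real \<Rightarrow> real) \<Rightarrow> bool" where
  "solves_ode q a b u u' \<longleftrightarrow>
     (\<forall>t\<in>{a..b}. (u has_real_derivative u' t) (at t within {a..b})) \<and>
     continuous_on {a..b} u' \<and>
     (\<exists>S. finite S \<and> (\<forall>t\<in>{a..b} - S. (u' has_real_derivative (- q t * u t)) (at t within {a..b})))"

lemma is_solution_iff_solves_ode:
  "is_solution q a b u \<longleftrightarrow> (\<exists>u'. solves_ode q a b u u') \<and> (\<exists>t\<in>{a..b}. u t \<noteq> 0)"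
  unfolding is_solution_def solves_ode_def by blast

lemma solves_ode_continuous_on:
  assumes "solves_ode q a b u u'"
  shows "continuous_on {a..b} u" and "continuous_on {a..b} u'"
  using assms unfolding solves_ode_def by (auto intro: DERIV_continuous_on)

lemma solves_ode_subinterval:
  assumes "solves_ode q a b u u'" and "a \<le> c" "d \<le> b"
  shows "solves_ode q c d u u'"
proof -
  have sub: "{c..d} \<subseteq> {a..b}"
    using assms(2,3) by auto
  then show ?thesis
    using assms(1) unfolding solves_ode_def
    by (blast intro: has_field_derivative_subset continuous_on_subset)
qed

lemma solves_ode_uminus:
  assumes "solves_ode q a b u u'"
  shows "solves_ode q a b (\<lambda>t. - u t) (\<lambda>t. - u' t)"
proof -
  obtain S where "finite S"
    and "\<forall>t\<in>{a..b} - S. (u' has_real_derivative (- q t * u t)) (at t within {a..b})"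
    using assms unfolding solves_ode_def by blast
  moreover have "((\<lambda>t. - u' t) has_real_derivative - q t * - u t) (at t within {a..b})"
    if "(u' has_real_derivative (- q t * u t)) (at t within {a..b})" for t
    using DERIV_minus[OF that] by simp
  ultimately show ?thesis
    using assms unfolding solves_ode_def
    by (auto intro!: DERIV_minus continuous_on_minus exI[of _ S])
qed

lemma solves_ode_interiorE:
  assumes "solves_ode q a b u u'"
  obtains S where "finite S"
    and "\<And>t. t \<in> {a<..<b} \<Longrightarrow> (u has_real_derivative u' t) (at t)"
    and "\<And>t. t \<in> {a<..<b} - S \<Longrightarrow> (u' has_real_derivative (- q t * u t)) (at t)"
proof -
  obtain S where "finite S"
    and du: "\<forall>t\<in>{a..b}. (u has_real_derivative u' t) (at t within {a..b})"
    and du': "\<forall>t\<in>{a..b} - S. (u' has_real_derivative (- q t * u t)) (at t within {a..b})"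
    using assms unfolding solves_ode_def by blast
  have at: "t \<in> {a..b}" "at t within {a..b} = at t" if "t \<in> {a<..<b}" for t
    using that by (auto simp: at_within_Icc_at)
  show thesis
  proof (rule that[OF \<open>finite S\<close>])
    show "(u has_real_derivative u' t) (at t)" if "t \<in> {a<..<b}" for t
      using du at[OF that] by metis
    show "(u' has_real_derivative (- q t * u t)) (at t)" if "t \<in> {a<..<b} - S" for t
      using du' at[of t] that by (metis Diff_iff)
  qed
qed

section \<open>Uniqueness for the initial value problem\<close>

lemma linear_ode_zero_on_short_interval:
  fixes v v' q :: "real \<Rightarrow> real"
  assumes cont: "continuous_on {c..d} v" "continuous_on {c..d} v'"
    and dv: "\<And>z. z \<in> {c<..<d} \<Longrightarrow> (v has_real_derivative v' z) (at z)"
    and dv': "\<And>z. z \<in> {c<..<d} - {x0} \<Longrightarrow> (v' has_real_derivative (- q z * v z)) (at z)"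
    and q: "\<And>z. z \<in> {c<..<d} - {x0} \<Longrightarrow> \<bar>q z\<bar> \<le> M"
    and "0 \<le> M" and short: "(1 + M) * (d - c) < 1"
    and x0: "x0 \<in> {c..d}" "v x0 = 0" "v' x0 = 0"
  shows "\<forall>y\<in>{c..d}. v y = 0 \<and> v' y = 0"
proof -
  define g where "g y = \<bar>v y\<bar> + \<bar>v' y\<bar>" for y
  have "continuous_on {c..d} g"
    unfolding g_def using cont by (intro continuous_intros)
  then obtain ym where "ym \<in> {c..d}" and ym: "\<And>y. y \<in> {c..d} \<Longrightarrow> g y \<le> g ym"
    using continuous_attains_sup[of "{c..d}" g] x0 by auto
  define K where "K = g ym"
  have "K \<ge> 0"
    unfolding K_def g_def by simp
  txt \<open>The mean value theorem, started at \<open>x0\<close>, gives \<open>K \<le> (1 + M) * (d - c) * K\<close>.\<close>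
  have "g y \<le> (1 + M) * K * (d - c)" if y: "y \<in> {c..d}" for y
  proof -
    define l h where "l = min x0 y" and "h = max x0 y"
    have lh: "c \<le> l" "l \<le> h" "h \<le> d"
      using x0 y unfolding l_def h_def by auto
    have z: "z \<in> {c..d}" "z \<in> {c<..<d} - {x0}" if "z \<in> {l<..<h}" for z
      using that lh unfolding l_def h_def by auto
    have "\<bar>v h - v l\<bar> \<le> K * (h - l)"
    proof (rule abs_diff_le_of_deriv_bound)
      show "continuous_on {l..h} v"
        using lh by (intro continuous_on_subset[OF cont(1)]) auto
      show "\<bar>v' z\<bar> \<le> K" if "z \<in> {l<..<h}" for z
        using ym[OF z(1)[OF that]] unfolding K_def g_def by simp
    qed (use lh z dv in auto)
    moreover have "\<bar>v' h - v' l\<bar> \<le> M * K * (h - l)"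
    proof (rule abs_diff_le_of_deriv_bound)
      show "continuous_on {l..h} v'"
        using lh by (intro continuous_on_subset[OF cont(2)]) auto
      show "\<bar>- q z * v z\<bar> \<le> M * K" if "z \<in> {l<..<h}" for z
      proof -
        have "\<bar>v z\<bar> \<le> K"
          using ym[OF z(1)[OF that]] unfolding K_def g_def by simp
        then show ?thesis
          using q[OF z(2)[OF that]] \<open>K \<ge> 0\<close> by (simp add: abs_mult mult_mono')
      qed
    qed (use lh z dv' in auto)
    moreover have "\<bar>v h - v l\<bar> = \<bar>v y\<bar>" "\<bar>v' h - v' l\<bar> = \<bar>v' y\<bar>" "h - l \<le> d - c"
      using x0 lh unfolding l_def h_def by (auto simp: abs_minus_commute)
    ultimately have "g y \<le> (1 + M) * K * (h - l)"
      unfolding g_def by (simp add: algebra_simps)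
    also have "\<dots> \<le> (1 + M) * K * (d - c)"
      using \<open>h - l \<le> d - c\<close> \<open>K \<ge> 0\<close> \<open>M \<ge> 0\<close> by (intro mult_left_mono) auto
    finally show ?thesis .
  qed
  then have "K \<le> (1 + M) * (d - c) * K"
    using \<open>ym \<in> {c..d}\<close> unfolding K_def by (simp add: mult_ac)
  then have "(1 - (1 + M) * (d - c)) * K \<le> 0"
    by (simp add: algebra_simps)
  with short have "K \<le> 0"
    by (simp add: mult_le_0_iff)
  show ?thesis
  proof
    fix y
    assume "y \<in> {c..d}"
    then have "\<bar>v y\<bar> + \<bar>v' y\<bar> \<le> 0"
      using ym \<open>K \<le> 0\<close> unfolding K_def g_def by force
    then show "v y = 0 \<and> v' y = 0"
      using abs_ge_zero[of "v y"] abs_ge_zero[of "v' y"] by simp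
  qed
qed

lemma solves_ode_zero_locally:
  assumes q: "piecewise_continuous_on a b q" and v: "solves_ode q a b v v'"
    and x0: "x0 \<in> {a..b}" and "v x0 = 0" "v' x0 = 0"
  shows "\<exists>r>0. \<forall>y\<in>{a..b}. dist y x0 < r \<longrightarrow> v y = 0 \<and> v' y = 0"
proof -
  obtain S where "finite S" and dv: "\<And>t. t \<in> {a<..<b} \<Longrightarrow> (v has_real_derivative v' t) (at t)"
    and dv': "\<And>t. t \<in> {a<..<b} - S \<Longrightarrow> (v' has_real_derivative (- q t * v t)) (at t)"
    using solves_ode_interiorE[OF v] by blast
  obtain M where M: "\<forall>\<^sub>F y in at x0 within {a..b}. \<bar>q y\<bar> \<le> M"
    using piecewise_continuous_on_locally_bounded[OF q x0] by blast
  have "\<forall>\<^sub>F y in at x0 within {a..b} - S. y \<notin> S"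
    by (simp add: eventually_at_filter)
  then have "\<forall>\<^sub>F y in at x0 within {a..b}. \<bar>q y\<bar> \<le> M \<and> y \<notin> S"
    using M by (simp add: at_within_diff_finite[OF \<open>finite S\<close>] eventually_conj_iff)
  then obtain e where "e > 0"
    and e: "\<And>y. y \<in> {a..b} \<Longrightarrow> y \<noteq> x0 \<Longrightarrow> dist y x0 < e \<Longrightarrow> \<bar>q y\<bar> \<le> M \<and> y \<notin> S"
    unfolding eventually_at by blast
  txt \<open>On \<open>[x0 - r, x0 + r]\<close> the equation for \<open>v'\<close> holds everywhere except possibly at \<open>x0\<close>.\<close>
  define r where "r = min (e / 2) (1 / (4 * (1 + \<bar>M\<bar>)))"
  have "0 < r" "r < e"
    using \<open>e > 0\<close> unfolding r_def by auto
  have "(1 + \<bar>M\<bar>) * (2 * r) \<le> (1 + \<bar>M\<bar>) * (2 * (1 / (4 * (1 + \<bar>M\<bar>))))"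
    unfolding r_def by (intro mult_left_mono) auto
  also have "\<dots> = 1 / 2"
    by (simp add: field_simps)
  finally have "(1 + \<bar>M\<bar>) * (2 * r) < 1"
    by simp
  define c d where "c = max a (x0 - r)" and "d = min b (x0 + r)"
  have cd: "x0 \<in> {c..d}" "{c..d} \<subseteq> {a..b}" "d - c \<le> 2 * r"
    using x0 \<open>0 < r\<close> unfolding c_def d_def by auto
  have "\<forall>y\<in>{c..d}. v y = 0 \<and> v' y = 0"
  proof (rule linear_ode_zero_on_short_interval[where q = q and M = "\<bar>M\<bar>"])
    show "continuous_on {c..d} v" "continuous_on {c..d} v'"
      using solves_ode_continuous_on[OF v] cd(2) by (auto intro: continuous_on_subset)
    have interior: "z \<in> {a<..<b}" "z \<in> {a..b}" "z \<noteq> x0" "dist z x0 < e" if "z \<in> {c<..<d} - {x0}" for z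
      using that \<open>r < e\<close> unfolding c_def d_def by (auto simp: dist_real_def)
    show "(v has_real_derivative v' z) (at z)" if "z \<in> {c<..<d}" for z
      using that cd(2) by (intro dv) (auto simp: c_def d_def)
    show "(v' has_real_derivative (- q z * v z)) (at z)" if "z \<in> {c<..<d} - {x0}" for z
      using interior[OF that] e by (intro dv') auto
    show "\<bar>q z\<bar> \<le> \<bar>M\<bar>" if "z \<in> {c<..<d} - {x0}" for z
      using interior[OF that] e[of z] by linarith
    have "(1 + \<bar>M\<bar>) * (d - c) \<le> (1 + \<bar>M\<bar>) * (2 * r)"
      using cd(3) by (intro mult_left_mono) auto
    then show "(1 + \<bar>M\<bar>) * (d - c) < 1"
      using \<open>(1 + \<bar>M\<bar>) * (2 * r) < 1\<close> by linarith
  qed (use cd \<open>v x0 = 0\<close> \<open>v' x0 = 0\<close> in auto)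
  moreover have "y \<in> {c..d}" if "y \<in> {a..b}" "dist y x0 < r" for y
    using that unfolding c_def d_def by (auto simp: dist_real_def)
  ultimately show ?thesis
    using \<open>0 < r\<close> by blast
qed

lemma solves_ode_zero_unique:
  assumes q: "piecewise_continuous_on a b q" and v: "solves_ode q a b v v'"
    and "x0 \<in> {a..b}" "v x0 = 0" "v' x0 = 0"
  shows "\<forall>x\<in>{a..b}. v x = 0"
proof -
  define Z where "Z = {x \<in> {a..b}. (v x, v' x) = (0, 0)}"
  have "continuous_on {a..b} (\<lambda>x. (v x, v' x))"
    using solves_ode_continuous_on[OF v] by (intro continuous_intros)
  then have "closedin (top_of_set {a..b}) Z"
    unfolding Z_def by (rule continuous_closedin_preimage_constant)
  moreover have "openin (top_of_set {a..b}) Z"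
    unfolding openin_euclidean_subtopology_iff
  proof (intro conjI ballI)
    show "Z \<subseteq> {a..b}"
      unfolding Z_def by auto
    fix x
    assume "x \<in> Z"
    then obtain r where "r > 0" "\<forall>y\<in>{a..b}. dist y x < r \<longrightarrow> v y = 0 \<and> v' y = 0"
      using solves_ode_zero_locally[OF q v] unfolding Z_def by blast
    then show "\<exists>e>0. \<forall>y\<in>{a..b}. dist y x < e \<longrightarrow> y \<in> Z"
      unfolding Z_def by auto
  qed
  moreover have "Z \<noteq> {}"
    using assms(3-5) unfolding Z_def by auto
  ultimately have "Z = {a..b}"
    using connected_Icc unfolding connected_clopen by blast
  then show ?thesis
    unfolding Z_def by auto
qed

lemma solves_ode_vanishing_on_interval:
  assumes q: "piecewise_continuous_on a b q" and v: "solves_ode q a b v v'"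
    and "a \<le> s" "s < t" "t \<le> b" and vanish: "\<And>x. x \<in> {s<..<t} \<Longrightarrow> v x = 0"
  shows "\<forall>x\<in>{a..b}. v x = 0"
proof -
  define m where "m = (s + t) / 2"
  have m: "m \<in> {s<..<t}" "m \<in> {a..b}"
    using assms(3-5) unfolding m_def by auto
  obtain S where "\<And>x. x \<in> {a<..<b} \<Longrightarrow> (v has_real_derivative v' x) (at x)"
    using solves_ode_interiorE[OF v] by blast
  then have "(v has_real_derivative v' m) (at m)"
    using m assms(3-5) by auto
  moreover have "(v has_real_derivative 0) (at m)"
    using has_field_derivative_transform_within_open[OF DERIV_const open_greaterThanLessThan m(1)] vanish
    by simp
  ultimately have "v' m = 0"
    by (rule DERIV_unique)
  moreover have "v m = 0"
    using vanish m by blast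
  ultimately show ?thesis
    using solves_ode_zero_unique[OF q v m(2)] by blast
qed

section \<open>Sturm comparison\<close>

lemma sturm_comparison_product_nonpos:
  assumes "c < d"
    and u: "solves_ode q1 c d u u'" and v: "solves_ode q2 c d v v'"
    and "v c = 0" "v d = 0"
    and q: "\<And>x. x \<in> {c<..<d} \<Longrightarrow> q2 x < q1 x"
  shows "\<exists>x\<in>{c<..<d}. u x * v x \<le> 0"
proof (rule ccontr)
  assume "\<not> ?thesis"
  then have uv: "u x * v x > 0" if "x \<in> {c<..<d}" for x
    using that by force
  obtain S1 where "finite S1" and du: "\<And>x. x \<in> {c<..<d} \<Longrightarrow> (u has_real_derivative u' x) (at x)"
    and du': "\<And>x. x \<in> {c<..<d} - S1 \<Longrightarrow> (u' has_real_derivative (- q1 x * u x)) (at x)"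
    using solves_ode_interiorE[OF u] by blast
  obtain S2 where "finite S2" and dv: "\<And>x. x \<in> {c<..<d} \<Longrightarrow> (v has_real_derivative v' x) (at x)"
    and dv': "\<And>x. x \<in> {c<..<d} - S2 \<Longrightarrow> (v' has_real_derivative (- q2 x * v x)) (at x)"
    using solves_ode_interiorE[OF v] by blast
  note cu = solves_ode_continuous_on(1)[OF u] and cv = solves_ode_continuous_on(1)[OF v]
  note cu' = solves_ode_continuous_on(2)[OF u] and cv' = solves_ode_continuous_on(2)[OF v]
  define W where "W x = u x * v' x - u' x * v x" for x
  have "W c < W d"
  proof (rule DERIV_pos_imp_increasing_open_finite[of "S1 \<union> S2" c d W])
    show "continuous_on {c..d} W"
      unfolding W_def using cu cv cu' cv' by (intro continuous_intros)
    fix x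
    assume x: "x \<in> {c<..<d} - (S1 \<union> S2)"
    then have "(W has_real_derivative
        u' x * v' x + u x * (- q2 x * v x) - (- q1 x * u x * v x + u' x * v' x)) (at x)"
      unfolding W_def by (auto intro!: derivative_eq_intros du dv du' dv')
    moreover have "u' x * v' x + u x * (- q2 x * v x) - (- q1 x * u x * v x + u' x * v' x)
        = (q1 x - q2 x) * (u x * v x)"
      by (simp add: algebra_simps)
    moreover have "(q1 x - q2 x) * (u x * v x) > 0"
      using x q uv by simp
    ultimately show "\<exists>y. DERIV W x :> y \<and> y > 0"
      by metis
  qed (use \<open>c < d\<close> \<open>finite S1\<close> \<open>finite S2\<close> in auto)
  txt \<open>As \<open>v c = v d = 0\<close>, the values \<open>W c\<close> and \<open>W d\<close> are the one-sided limits of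
    \<open>u y * v y / (y - c)\<close> and \<open>u y * v y / (y - d)\<close>.\<close>
  have "u c * v' c \<ge> 0"
  proof -
    have "((\<lambda>y. u y * ((v y - v c) / (y - c))) \<longlongrightarrow> u c * v' c) (at_right c)"
    proof (rule tendsto_mult)
      show "(u \<longlongrightarrow> u c) (at_right c)"
        using cu \<open>c < d\<close> by (simp add: continuous_on_Icc_at_rightD)
      have "(v has_real_derivative v' c) (at c within {c..d})"
        using v \<open>c < d\<close> unfolding solves_ode_def by auto
      then show "((\<lambda>y. (v y - v c) / (y - c)) \<longlongrightarrow> v' c) (at_right c)"
        using \<open>c < d\<close> by (simp add: has_field_derivative_iff at_within_Icc_at_right)
    qed
    moreover have "\<forall>\<^sub>F y in at_right c. 0 \<le> u y * ((v y - v c) / (y - c))"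
      unfolding eventually_at_right_field
    proof (intro exI[of _ d] conjI allI impI)
      fix y
      assume "c < y" "y < d"
      then have "0 < u y * v y / (y - c)"
        using uv by simp
      then show "0 \<le> u y * ((v y - v c) / (y - c))"
        using \<open>v c = 0\<close> by simp
    qed fact
    ultimately show ?thesis
      by (rule tendsto_lowerbound) simp
  qed
  moreover have "u d * v' d \<le> 0"
  proof -
    have "((\<lambda>y. u y * ((v y - v d) / (y - d))) \<longlongrightarrow> u d * v' d) (at_left d)"
    proof (rule tendsto_mult)
      show "(u \<longlongrightarrow> u d) (at_left d)"
        using cu \<open>c < d\<close> by (simp add: continuous_on_Icc_at_leftD)
      have "(v has_real_derivative v' d) (at d within {c..d})"
        using v \<open>c < d\<close> unfolding solves_ode_def by auto
      then show "((\<lambda>y. (v y - v d) / (y - d)) \<longlongrightarrow> v' d) (at_left d)"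
        using \<open>c < d\<close> by (simp add: has_field_derivative_iff at_within_Icc_at_left)
    qed
    moreover have "\<forall>\<^sub>F y in at_left d. u y * ((v y - v d) / (y - d)) \<le> 0"
      unfolding eventually_at_left_field
    proof (intro exI[of _ c] conjI allI impI)
      fix y
      assume "c < y" "y < d"
      then have "u y * v y / (y - d) < 0"
        using uv by (simp add: divide_pos_neg)
      then show "u y * ((v y - v d) / (y - d)) \<le> 0"
        using \<open>v d = 0\<close> by simp
    qed fact
    ultimately show ?thesis
      by (rule tendsto_upperbound) simp
  qed
  ultimately show False
    using \<open>W c < W d\<close> \<open>v c = 0\<close> \<open>v d = 0\<close> unfolding W_def by simp
qed

lemma sturm_comparison:
  assumes "c < d"
    and u: "solves_ode q1 c d u u'" and v: "solves_ode q2 c d v v'"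
    and "v c = 0" "v d = 0" and v_nonzero: "\<And>x. x \<in> {c<..<d} \<Longrightarrow> v x \<noteq> 0"
    and q: "\<And>x. x \<in> {c<..<d} \<Longrightarrow> q2 x < q1 x"
  shows "\<exists>x\<in>{c<..<d}. u x = 0"
proof (rule ccontr)
  assume "\<not> ?thesis"
  then have "u x * v x \<noteq> 0" if "x \<in> {c<..<d}" for x
    using that v_nonzero by auto
  moreover have "continuous_on {c<..<d} (\<lambda>x. u x * v x)"
    using solves_ode_continuous_on(1)[OF u] solves_ode_continuous_on(1)[OF v]
    by (intro continuous_intros) (auto intro: continuous_on_subset)
  ultimately consider "\<forall>x\<in>{c<..<d}. u x * v x > 0" | "\<forall>x\<in>{c<..<d}. u x * v x < 0"
    using continuous_on_nonzero_sign_cases by blast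
  then show False
  proof cases
    case 1
    then show False
      using sturm_comparison_product_nonpos[OF \<open>c < d\<close> u v] assms by fastforce
  next
    case 2
    then show False
      using sturm_comparison_product_nonpos[OF \<open>c < d\<close> u solves_ode_uminus[OF v]] assms
      by fastforce
  qed
qed

lemma solves_ode_no_two_zeros:
  assumes q2: "piecewise_continuous_on a b q2"
    and u: "solves_ode q1 a b u u'" and u_nonzero: "\<And>x. x \<in> {a<..<b} \<Longrightarrow> u x \<noteq> 0"
    and v: "solves_ode q2 a b v v'" and v_nontrivial: "\<exists>x\<in>{a..b}. v x \<noteq> 0"
    and st: "a \<le> s" "s < t" "t \<le> b" and "v s = 0" "v t = 0"
    and q: "\<And>x. x \<in> {s..t} \<Longrightarrow> q2 x < q1 x"
  shows False
proof (cases "\<forall>x\<in>{s<..<t}. v x = 0")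
  case True
  then show False
    using solves_ode_vanishing_on_interval[OF q2 v st] v_nontrivial by blast
next
  case False
  then obtain x where x: "x \<in> {s<..<t}" "v x \<noteq> 0"
    by blast
  have "continuous_on {s..t} v"
    using solves_ode_continuous_on(1)[OF v] st by (auto intro: continuous_on_subset)
  then obtain c d where cd: "s \<le> c" "c < d" "d \<le> t" "v c = 0" "v d = 0"
    and v_nonzero: "\<And>y. y \<in> {c<..<d} \<Longrightarrow> v y \<noteq> 0"
    using continuous_on_consecutive_zeros \<open>v s = 0\<close> \<open>v t = 0\<close> x by metis
  have "\<exists>y\<in>{c<..<d}. u y = 0"
  proof (rule sturm_comparison)
    show "solves_ode q1 c d u u'" "solves_ode q2 c d v v'"
      using cd st by (auto intro: solves_ode_subinterval[OF u] solves_ode_subinterval[OF v])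
  qed (use cd v_nonzero q in auto)
  then show False
    using u_nonzero cd st by force
qed

theorem lemma1:
  fixes q1 q2 u :: "real \<Rightarrow> real" and a b :: real and J :: "real set"
  assumes "a < b"
    and "piecewise_continuous_on a b q1" and "piecewise_continuous_on a b q2"
    and "is_solution q1 a b u"
    and "u a = 0" and "u b = 0" and "\<forall>t\<in>{a<..<b}. u t \<noteq> 0"
    and "is_interval J" and "J \<subseteq> {a..b}"
    and "\<forall>t\<in>{a..b} - J. q1 t \<le> q2 t"
    and "\<forall>t\<in>J. q1 t > q2 t"
  shows "\<forall>v. is_solution q2 a b v \<longrightarrow>
           (\<forall>s\<in>J. \<forall>t\<in>J. v s = 0 \<and> v t = 0 \<longrightarrow> s = t)"
proof (intro allI impI ballI)
  fix v s t
  assume "is_solution q2 a b v" and "s \<in> J" "t \<in> J" and "v s = 0 \<and> v t = 0"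
  then obtain v' where v: "solves_ode q2 a b v v'" and v_nontrivial: "\<exists>x\<in>{a..b}. v x \<noteq> 0"
    by (auto simp: is_solution_iff_solves_ode)
  obtain u' where u: "solves_ode q1 a b u u'"
    using assms(4) by (auto simp: is_solution_iff_solves_ode)
  have False if "s' \<in> J" "t' \<in> J" "s' < t'" "v s' = 0" "v t' = 0" for s' t'
  proof (rule solves_ode_no_two_zeros[OF assms(3) u _ v v_nontrivial])
    have "{s'..t'} \<subseteq> J"
      using mem_is_interval_1_I[OF assms(8) that(1,2)] by auto
    then show "\<And>x. x \<in> {s'..t'} \<Longrightarrow> q2 x < q1 x"
      using assms(11) by blast
    show "a \<le> s'" "t' \<le> b"
      using that assms(9) by auto
  qed (use that assms(7) in auto)
  then show "s = t"
    using \<open>s \<in> J\<close> \<open>t \<in> J\<close> \<open>v s = 0 \<and> v t = 0\<close> by (metis linorder_neqE_linordered_idom)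
qed

end
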